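(* Let $A,B\in\mathbb{R}^{n\times n}$ with $A$ symmetric positive definite, and suppose the block matrix $\begin{pmatrix}A & B\\ B^\intercal & A\end{pmatrix}$ is positive definite. Then $$2\begin{pmatrix}A & B\\ B^\intercal & A\end{pmatrix}^{-1}-\begin{pmatrix}A & 0\\ 0 & A\end{pmatrix}^{-1}$$ is positive definite. *)

theory Defs
  imports "HOL-Analysis.Analysis"
begin

definition pos_def_mat :: "real^'n^'n \<Rightarrow> bool" where
  "pos_def_mat M \<longleftrightarrow> transpose M = M \<and> (\<forall>x. x \<noteq> 0 \<longrightarrow> x \<bullet> (M *v x) > 0)"

definition block_mat :: "real^'n^'n \<Rightarrow> real^'n^'n \<Rightarrow> real^'n^'n \<Rightarrow> real^'n^'n \<Rightarrow> real^('n + 'n)^('n + 'n)" where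
  "block_mat P Q R S = (\<chi> i j. case i of
      Inl a \<Rightarrow> (case j of Inl b \<Rightarrow> P $ a $ b | Inr b \<Rightarrow> Q $ a $ b)
    | Inr a \<Rightarrow> (case j of Inl b \<Rightarrow> R $ a $ b | Inr b \<Rightarrow> S $ a $ b))"

end

theory Submission
  imports Defs
begin

text \<open>Write \<open>M\<close> for the block matrix and \<open>D = diag(A, A)\<close>. Conjugating \<open>M\<close> by
  \<open>J = diag(I, -I)\<close> flips the sign of the off-diagonal blocks, so \<open>J M J + M = 2 D\<close>; as
  \<open>J M J\<close> is positive definite, \<open>M < 2 D\<close> in the Loewner order. Inversion reverses the
  Loewner order, whence \<open>(2 D)\<^sup>-\<^sup>1 < M\<^sup>-\<^sup>1\<close>, i.e. \<open>2 M\<^sup>-\<^sup>1 - D\<^sup>-\<^sup>1\<close> is positive definite.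
  The order reversal follows from the variational formula
  \<open>x\<^sup>T M\<^sup>-\<^sup>1 x = max\<^sub>v (2 x\<^sup>T v - v\<^sup>T M v)\<close>.\<close>

lemma invertible_matrix_inv:
  fixes M :: "real^'m^'m"
  assumes "invertible M"
  shows "M ** matrix_inv M = mat 1" "matrix_inv M ** M = mat 1"
  using someI_ex[OF assms[unfolded invertible_def]] unfolding matrix_inv_def by auto

lemma symmetric_matrix_inv:
  fixes M :: "real^'m^'m"
  assumes "invertible M" "transpose M = M"
  shows "transpose (matrix_inv M) = matrix_inv M"
proof -
  have "transpose (matrix_inv M) ** M = mat 1"
    using arg_cong[OF invertible_matrix_inv(1)[OF assms(1)], of transpose]
    by (simp add: matrix_transpose_mul assms(2))
  then have "transpose (matrix_inv M) = transpose (matrix_inv M) ** (M ** matrix_inv M)"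
    by (simp add: invertible_matrix_inv[OF assms(1)])
  also have "\<dots> = matrix_inv M"
    by (simp add: matrix_mul_assoc \<open>transpose (matrix_inv M) ** M = mat 1\<close>)
  finally show ?thesis .
qed

lemma symmetric_inner_matrix_vector:
  fixes M :: "real^'m^'m"
  assumes "transpose M = M"
  shows "u \<bullet> (M *v v) = (M *v u) \<bullet> v"
  by (metis assms dot_lmul_matrix inner_commute vector_transpose_matrix)

lemma pos_def_mat_invertible:
  fixes M :: "real^'m^'m"
  assumes "pos_def_mat M"
  shows "invertible M"
proof -
  have "\<forall>x. M *v x = 0 \<longrightarrow> x = 0"
    using assms unfolding pos_def_mat_def by (metis inner_zero_right less_irrefl)
  then show ?thesis
    using matrix_left_invertible_ker invertible_left_inverse by blast
qed

lemma pos_def_mat_nonneg: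
  fixes M :: "real^'m^'m"
  assumes "pos_def_mat M"
  shows "0 \<le> x \<bullet> (M *v x)"
  using assms unfolding pos_def_mat_def by (cases "x = 0") (auto intro: less_imp_le)

lemma pos_def_mat_inverse_quadratic_ge:
  fixes M :: "real^'m^'m"
  assumes "pos_def_mat M"
  shows "2 * (x \<bullet> v) - v \<bullet> (M *v v) \<le> x \<bullet> (matrix_inv M *v x)"
proof -
  define u where "u = matrix_inv M *v x"
  have xu: "M *v u = x"
    using invertible_matrix_inv(1)[OF pos_def_mat_invertible[OF assms]]
    by (simp add: u_def matrix_vector_mul_assoc)
  have sym: "transpose M = M" using assms unfolding pos_def_mat_def by simp
  have "0 \<le> (v - u) \<bullet> (M *v (v - u))"
    using assms by (rule pos_def_mat_nonneg)
  also have "\<dots> = v \<bullet> (M *v v) - v \<bullet> (M *v u) - u \<bullet> (M *v v) + u \<bullet> (M *v u)"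
    by (simp add: matrix_vector_mult_diff_distrib inner_diff_left inner_diff_right)
  also have "\<dots> = v \<bullet> (M *v v) - 2 * (x \<bullet> v) + u \<bullet> x"
    using symmetric_inner_matrix_vector[OF sym, of u v] by (simp add: xu inner_commute)
  also have "u \<bullet> x = x \<bullet> (matrix_inv M *v x)"
    by (simp add: u_def inner_commute)
  finally show ?thesis by simp
qed

text \<open>The variational bound at \<open>v = t N\<^sup>-\<^sup>1 x\<close>, with \<open>t\<close> optimal, already suffices.\<close>

lemma pos_def_mat_inverse_quadratic_less:
  fixes M N :: "real^'m^'m"
  assumes M: "pos_def_mat M" and N: "pos_def_mat N"
    and less: "\<And>w. w \<noteq> 0 \<Longrightarrow> w \<bullet> (M *v w) < c * (w \<bullet> (N *v w))"
    and "x \<noteq> 0"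
  shows "x \<bullet> (matrix_inv N *v x) < c * (x \<bullet> (matrix_inv M *v x))"
proof -
  define w where "w = matrix_inv N *v x"
  have xw: "x = N *v w"
    using invertible_matrix_inv(1)[OF pos_def_mat_invertible[OF N]]
    by (simp add: w_def matrix_vector_mul_assoc)
  have "w \<noteq> 0" using xw \<open>x \<noteq> 0\<close> by auto
  define d where "d = w \<bullet> (N *v w)"
  define m where "m = w \<bullet> (M *v w)"
  have "d > 0" "m > 0" "m < c * d"
    using M N less \<open>w \<noteq> 0\<close> unfolding pos_def_mat_def d_def m_def by auto
  have xw_d: "x \<bullet> w = d"
    unfolding d_def xw by (rule inner_commute)
  then have xNx: "x \<bullet> (matrix_inv N *v x) = d"
    by (simp only: w_def)
  have "2 * (x \<bullet> ((d / m) *\<^sub>R w)) - ((d / m) *\<^sub>R w) \<bullet> (M *v ((d / m) *\<^sub>R w))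
        \<le> x \<bullet> (matrix_inv M *v x)"
    using M by (rule pos_def_mat_inverse_quadratic_ge)
  moreover have "2 * (x \<bullet> ((d / m) *\<^sub>R w)) - ((d / m) *\<^sub>R w) \<bullet> (M *v ((d / m) *\<^sub>R w))
        = d * d / m"
    using \<open>m > 0\<close> by (simp add: xw_d m_def matrix_vector_mult_scaleR field_simps)
  ultimately have ge: "d * d / m \<le> x \<bullet> (matrix_inv M *v x)" by simp
  have "0 < c * d" using \<open>m > 0\<close> \<open>m < c * d\<close> by linarith
  then have "c > 0" using \<open>d > 0\<close> by (rule zero_less_mult_pos2)
  have "1 < c * d / m" using \<open>m > 0\<close> \<open>m < c * d\<close> by simp
  then have "d * 1 < d * (c * d / m)"
    using \<open>d > 0\<close> by (rule mult_strict_left_mono)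
  then have "x \<bullet> (matrix_inv N *v x) < d * (c * d / m)"
    using xNx by (simp only: mult_1_right)
  also have "\<dots> = c * (d * d / m)" by simp
  also have "\<dots> \<le> c * (x \<bullet> (matrix_inv M *v x))"
    using ge \<open>c > 0\<close> by (simp add: mult_left_mono del: times_divide_eq_right)
  finally show ?thesis .
qed

lemma pos_def_mat_diff:
  fixes P Q :: "real^'m^'m"
  assumes "transpose P = P" "transpose Q = Q"
    and "\<And>x. x \<noteq> 0 \<Longrightarrow> x \<bullet> (Q *v x) < x \<bullet> (P *v x)"
  shows "pos_def_mat (P - Q)"
proof -
  have "transpose (P - Q) = transpose P - transpose Q"
    by (simp add: transpose_def vec_eq_iff)
  then show ?thesis
    using assms unfolding pos_def_mat_def
    by (simp add: matrix_vector_mult_diff_rdistrib inner_diff_right)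
qed

definition negate_Inr :: "real^('n::finite + 'n) \<Rightarrow> real^('n + 'n)" where
  "negate_Inr w = (\<chi> i. case i of Inl a \<Rightarrow> w $ i | Inr a \<Rightarrow> - (w $ i))"

lemma negate_Inr_eq_0_iff [simp]: "negate_Inr w = 0 \<longleftrightarrow> w = 0"
proof
  assume "negate_Inr w = 0"
  then have "w $ i = 0" for i
    by (cases i) (auto simp: negate_Inr_def vec_eq_iff dest!: spec[of _ i])
  then show "w = 0" by (simp add: vec_eq_iff)
qed (simp add: negate_Inr_def vec_eq_iff split: sum.split)

lemma inner_matrix_vector_eq_sum:
  "(x::real^'m) \<bullet> (M *v x) = (\<Sum>i\<in>UNIV. \<Sum>j\<in>UNIV. x$i * M$i$j * x$j)"
  by (simp add: inner_vec_def matrix_vector_mult_def sum_distrib_left mult.assoc)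

lemma block_mat_quadratic_negate_Inr:
  fixes w :: "real^('n::finite + 'n)"
  shows "negate_Inr w \<bullet> (block_mat P Q R S *v negate_Inr w) + w \<bullet> (block_mat P Q R S *v w)
           = 2 * (w \<bullet> (block_mat P 0 0 S *v w))"
proof -
  have "(negate_Inr w)$i * block_mat P Q R S$i$j * (negate_Inr w)$j
          + w$i * block_mat P Q R S$i$j * w$j = 2 * (w$i * block_mat P 0 0 S$i$j * w$j)" for i j
    by (cases i; cases j) (simp_all add: negate_Inr_def block_mat_def)
  then show ?thesis
    unfolding inner_matrix_vector_eq_sum
    by (simp add: sum.distrib[symmetric] sum_distrib_left)
qed

lemma transpose_zero [simp]: "transpose 0 = 0"
  by (simp add: transpose_def vec_eq_iff)

lemma transpose_block_mat:
  "transpose (block_mat P Q R S) = block_mat (transpose P) (transpose R) (transpose Q) (transpose S)"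
  by (simp add: block_mat_def transpose_def vec_eq_iff split: sum.split)

lemma block_mat_eq_iff:
  "block_mat P Q R S = block_mat P' Q' R' S' \<longleftrightarrow> P = P' \<and> Q = Q' \<and> R = R' \<and> S = S'"
proof
  assume eq: "block_mat P Q R S = block_mat P' Q' R' S'"
  have "P$a$b = P'$a$b \<and> Q$a$b = Q'$a$b \<and> R$a$b = R'$a$b \<and> S$a$b = S'$a$b" for a b
    using arg_cong[OF eq, of "\<lambda>M. M$Inl a$Inl b"] arg_cong[OF eq, of "\<lambda>M. M$Inl a$Inr b"]
      arg_cong[OF eq, of "\<lambda>M. M$Inr a$Inl b"] arg_cong[OF eq, of "\<lambda>M. M$Inr a$Inr b"]
    by (simp add: block_mat_def)
  then show "P = P' \<and> Q = Q' \<and> R = R' \<and> S = S'" by (simp add: vec_eq_iff)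
qed simp

lemma pos_def_mat_block_diag:
  assumes pd: "pos_def_mat (block_mat P Q R S)"
  shows "pos_def_mat (block_mat P 0 0 S)"
proof -
  have "transpose P = P" "transpose S = S"
    using pd unfolding pos_def_mat_def transpose_block_mat block_mat_eq_iff by auto
  then have "transpose (block_mat P 0 0 S) = block_mat P 0 0 S"
    by (simp add: transpose_block_mat)
  moreover have "w \<bullet> (block_mat P 0 0 S *v w) > 0" if "w \<noteq> 0" for w
  proof -
    have "negate_Inr w \<bullet> (block_mat P Q R S *v negate_Inr w) > 0"
         "w \<bullet> (block_mat P Q R S *v w) > 0"
      using pd that unfolding pos_def_mat_def by simp_all
    then show ?thesis using block_mat_quadratic_negate_Inr[of w P Q R S] by linarith
  qed
  ultimately show ?thesis unfolding pos_def_mat_def by blast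
qed

lemma block_mat_quadratic_less_diag:
  assumes "pos_def_mat (block_mat P Q R S)" "w \<noteq> 0"
  shows "w \<bullet> (block_mat P Q R S *v w) < 2 * (w \<bullet> (block_mat P 0 0 S *v w))"
proof -
  have "negate_Inr w \<bullet> (block_mat P Q R S *v negate_Inr w) > 0"
    using assms unfolding pos_def_mat_def by simp
  then show ?thesis using block_mat_quadratic_negate_Inr[of w P Q R S] by linarith
qed

theorem lemmaA1:
  fixes A B :: "real^'n^'n"
  assumes "pos_def_mat A"
    and "pos_def_mat (block_mat A B (transpose B) A)"
  shows "pos_def_mat (2 *\<^sub>R matrix_inv (block_mat A B (transpose B) A)
                      - matrix_inv (block_mat A 0 0 A))"
proof -
  define M where "M = block_mat A B (transpose B) A"
  define D where "D = block_mat A (0::real^'n^'n) 0 A"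
  have M: "pos_def_mat M" using assms(2) by (simp add: M_def)
  have D: "pos_def_mat D" using pos_def_mat_block_diag[OF M[unfolded M_def]] by (simp add: D_def)
  have less: "x \<bullet> (matrix_inv D *v x) < x \<bullet> ((2 *\<^sub>R matrix_inv M) *v x)" if "x \<noteq> 0" for x
    using pos_def_mat_inverse_quadratic_less[OF M D _ that, of 2]
      block_mat_quadratic_less_diag[OF assms(2)]
    by (simp add: M_def D_def scaleR_matrix_vector_assoc[symmetric])
  have sym: "transpose (2 *\<^sub>R matrix_inv M) = 2 *\<^sub>R matrix_inv M"
    "transpose (matrix_inv D) = matrix_inv D"
    using M D by (simp_all add: transpose_scalar symmetric_matrix_inv pos_def_mat_invertible
        pos_def_mat_def)
  show ?thesis
    using pos_def_mat_diff[OF sym less] by (simp add: M_def D_def)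
qed

end
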